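(* Let $\mathcal F$ be a TBF algorithm and $G$ a Tanner graph. Let $V_{\mathrm e}\subset V(G)$ be the set of initially corrupt variable nodes and $I$ the induced subgraph of $G$ on $V_{\mathrm e}$. If there is no subset $V_{\mathrm s}\subset V(G)$ with $V_{\mathrm s}\supset V_{\mathrm e}$ such that the induced subgraph of $G$ on $V_{\mathrm s}$ is isomorphic to a graph in $\mathscr E_I^{\mathrm r}(\mathcal F)$, then $\mathcal F$ run on $G$ with initially corrupt set $V_{\mathrm e}$ converges (reaches zero syndrome) within at most $l^{\mathrm m}_{\mathcal F}$ iterations.
   Context: Tanner graphs: a Tanner graph $G$ is a bipartite graph with variable nodes $V(G)$, check nodes $C(G)$ and edges $E(G)$; every variable node has degree $d_{\mathrm v}$ (fixed). A subgraph $U$ of $G$ has $V(U)\subset V(G)$, $C(U)\subset C(G)$, $E(U)\subset E(G)$; $G$ also "contains" any graph isomorphic to a subgraph. The induced subgraph on $V_{\mathrm s}\subset V(G)$ has variable nodes $V_{\mathrm s}$, all check nodes adjacent to $V_{\mathrm s}$, and all edges of $G$ incident to $V_{\mathrm s}$. Decoding setting: the all-zero codeword is sent over the binary symmetric channel; $\mathbf y$ is the received vector; $\hat{\mathbf x}^l$ is the decision vector after iteration $l$ (with $\hat{\mathbf x}^0=\mathbf y$), and $\mathbf s^l=\hat{\mathbf x}^lH^{\mathrm T}$ its syndrome ($H$ the biadjacency matrix). A variable node $v$ is initially corrupt if $y_v=1$. TBF algorithm $\mathcal F=(f,l^{\mathrm m}_{\mathcal F},\Delta_{\mathrm v},\Delta_{\mathrm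 c})$: variable node states lie in $\mathcal A_{\mathrm v}=\{0_{\mathrm s},0_{\mathrm w},1_{\mathrm w},1_{\mathrm s}\}$ (state $a_{\mathrm s}$ or $a_{\mathrm w}$ means decision bit $a$), check node states in $\mathcal A_{\mathrm c}=\{0_{\mathrm p},0_{\mathrm n},1_{\mathrm p},1_{\mathrm n}\}$. Initialization: $w^0_v=\Delta_{\mathrm v}(y_v)$ with $\Delta_{\mathrm v}(0)\in\{0_{\mathrm s},0_{\mathrm w}\}$, $\Delta_{\mathrm v}(1)\in\{1_{\mathrm s},1_{\mathrm w}\}$; $z^1_c=\Delta_{\mathrm c}(s^0_c)$ with $\Delta_{\mathrm c}(0)\in\{0_{\mathrm p},0_{\mathrm n}\}$, $\Delta_{\mathrm c}(1)\in\{1_{\mathrm p},1_{\mathrm n}\}$. For $l=1,2,\dots$, while the syndrome is nonzero and $l<l^{\mathrm m}_{\mathcal F}$: every variable node updates $w^l_v=f(w^{l-1}_v,\chi^l_{0_{\mathrm p}}(v),\chi^l_{0_{\mathrm n}}(v),\chi^l_{1_{\mathrm p}}(v),\chi^l_{1_{\mathrm n}}(v))$, where $\chi^l_a(v)$ is the number of neighboring check nodes $c$ with $z^l_c=a$; then every check node updates $z^{l+1}_c=\Phi(s^{l-1}_c,s^l_c)$ with $\Phi(0,0)=0_{\mathrm p},\Phi(0,1)=1_{\mathrm n},\Phi(1,0)=0_{\mathrm n},\Phi(1,1)=1_{\mathrm p}$. Here $f:\mathcal A_{\mathrm v}\times\Xi_{d_{\mathrm v}}\to\mathcal A_{\mathrm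 v}$, where $\Xi_{d_{\mathrm v}}$ is the set of 4-tuples of nonnegative integers summing to $d_{\mathrm v}$; $f$ is symmetric with respect to $0$ and $1$ and every variable-node state is reachable from every other. Failure: for a TBF algorithm $\mathcal F$, a Tanner graph $G$ and a set $V_{\mathrm e}$ of initially corrupt variable nodes with induced subgraph $I$, "$\mathcal F$ fails on the subgraph $I$ of $G$" means $\mathcal F$ run on $G$ with initially corrupt set $V_{\mathrm e}$ does not converge (does not reach zero syndrome) within $l^{\mathrm m}_{\mathcal F}$ iterations. Trapping sets: for a Tanner graph $I$, $\mathscr E_I(\mathcal F)$ is the set of Tanner graphs $S$ containing a subgraph $J$ isomorphic to $I$ such that $\mathcal F$ fails on $J$ of $S$. $S_1\in\mathscr E_I(\mathcal F)$, with $\mathcal F$ failing on its subgraph $J_1$, belongs to $\mathscr E_I^{\mathrm r}(\mathcal F)$ if there is no $S_2\in\mathscr E_I(\mathcal F)$ with a subgraph $J_2$ such that $\mathcal F$ fails on $J_2$ of $S_2$ and there is an isomorphism between $S_2$ and a proper subgraph of $S_1$ mapping $V(J_2)$ into $V(J_1)$. Elements of $\mathscr E_I^{\mathrm r}(\mathcal F)$ are trapping sets of $\mathcal F$ with inducing set $I$; $\mathscr E_I^{\mathrm r}(\mathcal F)$ is the trapping set profile with inducing set $I$. *)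

theory Defs
  imports Main
begin

record 'v tgraph =
  vn :: "'v set"
  cn :: "'v set"
  ed :: "('v \<times> 'v) set"

definition bigraph :: "'v tgraph \<Rightarrow> bool" where
  "bigraph G \<longleftrightarrow> finite (vn G) \<and> finite (cn G) \<and> vn G \<inter> cn G = {}
     \<and> ed G \<subseteq> vn G \<times> cn G"

definition tanner :: "nat \<Rightarrow> 'v tgraph \<Rightarrow> bool" where
  "tanner dv G \<longleftrightarrow> bigraph G \<and> (\<forall>v\<in>vn G. card {c. (v, c) \<in> ed G} = dv)"

definition subgraph :: "'v tgraph \<Rightarrow> 'v tgraph \<Rightarrow> bool" where
  "subgraph U G \<longleftrightarrow> bigraph U \<and> vn U \<subseteq> vn G \<and> cn U \<subseteq> cn G \<and> ed U \<subseteq> ed G"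

definition induced :: "'v tgraph \<Rightarrow> 'v set \<Rightarrow> 'v tgraph" where
  "induced G Vs = \<lparr> vn = Vs,
                    cn = {c \<in> cn G. \<exists>v\<in>Vs. (v, c) \<in> ed G},
                    ed = {(v, c) \<in> ed G. v \<in> Vs} \<rparr>"

definition iso :: "('v \<Rightarrow> 'w) \<Rightarrow> 'v tgraph \<Rightarrow> 'w tgraph \<Rightarrow> bool" where
  "iso \<phi> G H \<longleftrightarrow> bij_betw \<phi> (vn G) (vn H) \<and> bij_betw \<phi> (cn G) (cn H)
     \<and> (\<forall>v\<in>vn G. \<forall>c\<in>cn G. (v, c) \<in> ed G \<longleftrightarrow> (\<phi> v, \<phi> c) \<in> ed H)"

definition isomorphic :: "'v tgraph \<Rightarrow> 'w tgraph \<Rightarrow> bool" where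
  "isomorphic G H \<longleftrightarrow> (\<exists>\<phi>. iso \<phi> G H)"

datatype vstate = V0s | V0w | V1w | V1s
datatype cstate = C0p | C0n | C1p | C1n

fun vbit :: "vstate \<Rightarrow> bool" where
  "vbit V0s = False" | "vbit V0w = False" | "vbit V1w = True" | "vbit V1s = True"

fun vflip :: "vstate \<Rightarrow> vstate" where
  "vflip V0s = V1s" | "vflip V0w = V1w" | "vflip V1w = V0w" | "vflip V1s = V0s"

text \<open>A TBF algorithm (f, lmax, Delta_v, Delta_c); the argument tuple of f is
  (chi_0p, chi_0n, chi_1p, chi_1n).\<close>
record tbf =
  tf :: "vstate \<Rightarrow> nat \<times> nat \<times> nat \<times> nat \<Rightarrow> vstate"
  lmax :: nat
  dlt_v :: "bool \<Rightarrow> vstate"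
  dlt_c :: "bool \<Rightarrow> cstate"

definition Xi :: "nat \<Rightarrow> (nat \<times> nat \<times> nat \<times> nat) set" where
  "Xi dv = {(a, b, c, d). a + b + c + d = dv}"

definition is_TBF :: "nat \<Rightarrow> tbf \<Rightarrow> bool" where
  "is_TBF dv F \<longleftrightarrow>
     dlt_v F False \<in> {V0s, V0w} \<and> dlt_v F True \<in> {V1s, V1w} \<and>
     dlt_c F False \<in> {C0p, C0n} \<and> dlt_c F True \<in> {C1p, C1n} \<and>
     (\<forall>w. \<forall>x\<in>Xi dv. tf F (vflip w) x = vflip (tf F w x)) \<and>
     (\<forall>a b. (a, b) \<in> {(w, tf F w x) | w x. x \<in> Xi dv}\<^sup>*)"

definition Phi :: "bool \<Rightarrow> bool \<Rightarrow> cstate" where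
  "Phi a b = (if b then (if a then C1p else C1n) else (if a then C0n else C0p))"

definition synd :: "'v tgraph \<Rightarrow> ('v \<Rightarrow> vstate) \<Rightarrow> 'v \<Rightarrow> bool" where
  "synd G w c = odd (card {v \<in> vn G. (v, c) \<in> ed G \<and> vbit (w v)})"

definition chi :: "'v tgraph \<Rightarrow> ('v \<Rightarrow> cstate) \<Rightarrow> 'v \<Rightarrow> nat \<times> nat \<times> nat \<times> nat" where
  "chi G z v =
     (card {c \<in> cn G. (v, c) \<in> ed G \<and> z c = C0p},
      card {c \<in> cn G. (v, c) \<in> ed G \<and> z c = C0n},
      card {c \<in> cn G. (v, c) \<in> ed G \<and> z c = C1p},
      card {c \<in> cn G. (v, c) \<in> ed G \<and> z c = C1n})"

text \<open>tstate F G Ve l = (w^l, z^(l+1)), where Ve is the set of initially corrupt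
  variable nodes (received bit y_v = 1 iff v in Ve).\<close>
primrec tstate :: "tbf \<Rightarrow> 'v tgraph \<Rightarrow> 'v set \<Rightarrow> nat \<Rightarrow> ('v \<Rightarrow> vstate) \<times> ('v \<Rightarrow> cstate)" where
  "tstate F G Ve 0 =
     (let w0 = (\<lambda>v. dlt_v F (v \<in> Ve)) in (w0, \<lambda>c. dlt_c F (synd G w0 c)))"
| "tstate F G Ve (Suc l) =
     (let w = fst (tstate F G Ve l); z = snd (tstate F G Ve l);
          w' = (\<lambda>v. tf F (w v) (chi G z v))
      in (w', \<lambda>c. Phi (synd G w c) (synd G w' c)))"

definition zero_synd :: "tbf \<Rightarrow> 'v tgraph \<Rightarrow> 'v set \<Rightarrow> nat \<Rightarrow> bool" where
  "zero_synd F G Ve l \<longleftrightarrow> (\<forall>c\<in>cn G. \<not> synd G (fst (tstate F G Ve l)) c)"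

definition converges :: "tbf \<Rightarrow> 'v tgraph \<Rightarrow> 'v set \<Rightarrow> bool" where
  "converges F G Ve \<longleftrightarrow> (\<exists>l\<le>lmax F. zero_synd F G Ve l)"

definition fails_on :: "tbf \<Rightarrow> 'v tgraph \<Rightarrow> 'v tgraph \<Rightarrow> bool" where
  "fails_on F S J \<longleftrightarrow> \<not> converges F S (vn J)"

definition in_E :: "nat \<Rightarrow> tbf \<Rightarrow> 'w tgraph \<Rightarrow> 'v tgraph \<Rightarrow> bool" where
  "in_E dv F I S \<longleftrightarrow> tanner dv S \<and>
     (\<exists>J. subgraph J S \<and> isomorphic J I \<and> fails_on F S J)"

definition in_Er :: "nat \<Rightarrow> tbf \<Rightarrow> 'w tgraph \<Rightarrow> 'v tgraph \<Rightarrow> bool" where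
  "in_Er dv F I S1 \<longleftrightarrow> tanner dv S1 \<and>
     (\<exists>J1. subgraph J1 S1 \<and> isomorphic J1 I \<and> fails_on F S1 J1 \<and>
        \<not> (\<exists>(S2 :: 'v tgraph) J2 U \<phi>.
              tanner dv S2 \<and> subgraph J2 S2 \<and> isomorphic J2 I \<and> fails_on F S2 J2 \<and>
              subgraph U S1 \<and> U \<noteq> S1 \<and> iso \<phi> S2 U \<and> \<phi> ` vn J2 \<subseteq> vn J1))"

end

theory Submission
  imports Defs
begin

text \<open>
  Suppose the decoder does not converge on G.
  Consider all triples (S, J, psi) where S is a Tanner graph with variable degree dv,
  J is a subgraph of S isomorphic to the inducing graph I = induced G Ve on which the
  decoder fails, and psi embeds S into G, mapping V(J) onto Ve.  The triple
  (G, I, id) is such a triple, so one with S of minimal size exists.  Minimality gives: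
  (1) S has no check node without neighbours, since deleting such a node does not
      change the decoder's run and yields a smaller failing triple;
  (2) S is a trapping set, i.e. in_Er, since a smaller failing graph embedded into a
      proper subgraph of S would, composed with psi, again be a smaller failing triple.
  Finally an embedding of a dv-regular graph without isolated checks into a dv-regular
  graph is an isomorphism onto the induced subgraph on the image of its variable
  nodes, contradicting the hypothesis of the theorem.  The argument uses only the
  combinatorics of the decoder's run, not the axioms of a TBF algorithm.
\<close>

section \<open>Size of a graph and isomorphisms\<close>

text \<open>Total number of nodes and edges; the quantity minimised in the main argument.\<close>
definition gsize :: "'v tgraph \<Rightarrow> nat" where
  "gsize G = card (vn G) + card (cn G) + card (ed G)"

lemma gsize_iso:
  assumes "bigraph A" "bigraph B" "iso \<phi> A B"
  shows "gsize A = gsize B"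
proof -
  have bv: "bij_betw \<phi> (vn A) (vn B)" and bc: "bij_betw \<phi> (cn A) (cn B)"
   and edge: "\<forall>v\<in>vn A. \<forall>c\<in>cn A. (v, c) \<in> ed A \<longleftrightarrow> (\<phi> v, \<phi> c) \<in> ed B"
    using assms(3) by (auto simp: iso_def)
  have eA: "ed A \<subseteq> vn A \<times> cn A" and eB: "ed B \<subseteq> vn B \<times> cn B"
    using assms(1,2) by (auto simp: bigraph_def)
  have "bij_betw (\<lambda>(a, c). (\<phi> a, \<phi> c)) (ed A) (ed B)"
    unfolding bij_betw_def
  proof
    show "inj_on (\<lambda>(a, c). (\<phi> a, \<phi> c)) (ed A)"
    proof (rule inj_onI, clarify)
      fix a c a' c' assume "(a, c) \<in> ed A" "(a', c') \<in> ed A" "\<phi> a = \<phi> a'" "\<phi> c = \<phi> c'"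
      then show "a = a' \<and> c = c'" using eA bv bc by (auto simp: bij_betw_def dest: inj_onD)
    qed
    show "(\<lambda>(a, c). (\<phi> a, \<phi> c)) ` ed A = ed B"
    proof
      show "(\<lambda>(a, c). (\<phi> a, \<phi> c)) ` ed A \<subseteq> ed B" using edge eA by auto
      show "ed B \<subseteq> (\<lambda>(a, c). (\<phi> a, \<phi> c)) ` ed A"
      proof clarify
        fix b d assume bd: "(b, d) \<in> ed B"
        then have "b \<in> \<phi> ` vn A" "d \<in> \<phi> ` cn A" using eB bv bc by (auto simp: bij_betw_def)
        then obtain a c where "a \<in> vn A" "c \<in> cn A" "b = \<phi> a" "d = \<phi> c" by blast
        with bd edge show "(b, d) \<in> (\<lambda>(a, c). (\<phi> a, \<phi> c)) ` ed A" by force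
      qed
    qed
  qed
  then have "card (ed A) = card (ed B)" by (rule bij_betw_same_card)
  moreover have "card (vn A) = card (vn B)" using bv by (rule bij_betw_same_card)
  moreover have "card (cn A) = card (cn B)" using bc by (rule bij_betw_same_card)
  ultimately show ?thesis by (simp add: gsize_def)
qed

lemma gsize_proper_subgraph:
  assumes "subgraph U S" "bigraph S" "U \<noteq> S"
  shows "gsize U < gsize S"
proof -
  have fin_vc: "finite (vn S)" "finite (cn S)" and "ed S \<subseteq> vn S \<times> cn S"
    using assms(2) by (simp_all add: bigraph_def)
  then have "finite (ed S)" using finite_subset by blast
  note fin = fin_vc this
  have sub: "vn U \<subseteq> vn S" "cn U \<subseteq> cn S" "ed U \<subseteq> ed S"
    using assms(1) by (auto simp: subgraph_def)
  have "vn U \<noteq> vn S \<or> cn U \<noteq> cn S \<or> ed U \<noteq> ed S"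
    using assms(3) by (cases U, cases S) auto
  then have "card (vn U) < card (vn S) \<or> card (cn U) < card (cn S) \<or> card (ed U) < card (ed S)"
    using sub fin by (meson psubset_card_mono psubset_eq)
  moreover have "card (vn U) \<le> card (vn S)" "card (cn U) \<le> card (cn S)" "card (ed U) \<le> card (ed S)"
    using sub fin by (auto intro: card_mono)
  ultimately show ?thesis unfolding gsize_def by linarith
qed

text \<open>The inverse of an isomorphism (onto a graph whose node classes are disjoint)
  is an isomorphism; needed because the theorem asks for isomorphism in the
  direction induced subgraph \<open>\<rightarrow>\<close> trapping set.\<close>
lemma iso_inv:
  assumes "iso \<phi> A B" "vn B \<inter> cn B = {}"
  shows "iso (inv_into (vn A \<union> cn A) \<phi>) B A"
proof -
  let ?\<psi> = "inv_into (vn A \<union> cn A) \<phi>"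
  have bv: "bij_betw \<phi> (vn A) (vn B)" and bc: "bij_betw \<phi> (cn A) (cn B)"
    using assms by (auto simp: iso_def)
  have inj: "inj_on \<phi> (vn A \<union> cn A)"
    unfolding inj_on_Un using bv bc assms(2) by (auto simp: bij_betw_def)
  have b: "bij_betw \<phi> (vn A \<union> cn A) (vn B \<union> cn B)"
    using inj bv bc by (auto simp: bij_betw_def image_Un)
  have iv: "bij_betw ?\<psi> (vn B) (vn A)"
    by (rule bij_betw_inv_into_subset[OF b]) (use bv in \<open>auto simp: bij_betw_def\<close>)
  have ic: "bij_betw ?\<psi> (cn B) (cn A)"
    by (rule bij_betw_inv_into_subset[OF b]) (use bc in \<open>auto simp: bij_betw_def\<close>)
  have "(b, d) \<in> ed B \<longleftrightarrow> (?\<psi> b, ?\<psi> d) \<in> ed A" if "b \<in> vn B" "d \<in> cn B" for b d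
  proof -
    have "?\<psi> b \<in> vn A" "?\<psi> d \<in> cn A" using iv ic that by (auto simp: bij_betw_def)
    moreover have "\<phi> (?\<psi> b) = b" "\<phi> (?\<psi> d) = d" using b that
      by (auto simp: bij_betw_def intro!: f_inv_into_f)
    ultimately show ?thesis using assms(1) by (auto simp: iso_def)
  qed
  then show ?thesis using iv ic by (auto simp: iso_def)
qed

lemma iso_induced_card:
  assumes "iso \<phi> J (induced G Ve)"
  shows "card (vn J) = card Ve"
  using assms by (auto simp: iso_def induced_def dest: bij_betw_same_card)

lemma iso_induced_check_has_neighbour:
  assumes "iso \<phi> J (induced G Ve)" "c \<in> cn J"
  shows "\<exists>v. (v, c) \<in> ed J"
proof -
  have "\<phi> c \<in> cn (induced G Ve)" using assms by (auto simp: iso_def bij_betw_def)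
  then obtain v' where v': "v' \<in> Ve" "(v', \<phi> c) \<in> ed G" by (auto simp: induced_def)
  have "Ve = \<phi> ` vn J" using assms(1) by (auto simp: iso_def bij_betw_def induced_def)
  then obtain v where "v \<in> vn J" "v' = \<phi> v" using v' by blast
  then have "(v, c) \<in> ed J" using assms v' by (auto simp: iso_def induced_def)
  then show ?thesis by blast
qed

section \<open>Embeddings\<close>

definition emb :: "('v \<Rightarrow> 'w) \<Rightarrow> 'v tgraph \<Rightarrow> 'w tgraph \<Rightarrow> bool" where
  "emb \<psi> S G \<longleftrightarrow> inj_on \<psi> (vn S) \<and> inj_on \<psi> (cn S) \<and> \<psi> ` vn S \<subseteq> vn G \<and> \<psi> ` cn S \<subseteq> cn G
     \<and> (\<forall>a c. (a, c) \<in> ed S \<longrightarrow> (\<psi> a, \<psi> c) \<in> ed G)"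

lemma emb_subgraph:
  assumes "emb \<psi> S G" "subgraph U S"
  shows "emb \<psi> U G"
proof -
  have "vn U \<subseteq> vn S" "cn U \<subseteq> cn S" "ed U \<subseteq> ed S" using assms(2) by (auto simp: subgraph_def)
  moreover have "inj_on \<psi> (vn S)" "inj_on \<psi> (cn S)" "\<psi> ` vn S \<subseteq> vn G" "\<psi> ` cn S \<subseteq> cn G"
    and "\<And>a c. (a, c) \<in> ed S \<Longrightarrow> (\<psi> a, \<psi> c) \<in> ed G"
    using assms(1) by (simp_all add: emb_def)
  ultimately show ?thesis unfolding emb_def by (meson image_mono inj_on_subset order_trans subsetD)
qed

lemma emb_comp_iso:
  assumes "emb \<psi> U G" "iso \<phi> S U" "bigraph S"
  shows "emb (\<psi> \<circ> \<phi>) S G"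
proof -
  have bv: "bij_betw \<phi> (vn S) (vn U)" and bc: "bij_betw \<phi> (cn S) (cn U)"
    and edge: "\<forall>v\<in>vn S. \<forall>c\<in>cn S. (v, c) \<in> ed S \<longleftrightarrow> (\<phi> v, \<phi> c) \<in> ed U"
    using assms(2) by (auto simp: iso_def)
  have "inj_on (\<psi> \<circ> \<phi>) (vn S)" "inj_on (\<psi> \<circ> \<phi>) (cn S)"
    using bv bc assms(1) unfolding emb_def bij_betw_def by (metis comp_inj_on)+
  moreover have "(\<psi> \<circ> \<phi>) ` vn S = \<psi> ` vn U" "(\<psi> \<circ> \<phi>) ` cn S = \<psi> ` cn U"
    using bv bc by (metis bij_betw_def image_comp)+
  then have "(\<psi> \<circ> \<phi>) ` vn S \<subseteq> vn G" "(\<psi> \<circ> \<phi>) ` cn S \<subseteq> cn G"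
    using assms(1) by (simp_all add: emb_def)
  moreover have "((\<psi> \<circ> \<phi>) a, (\<psi> \<circ> \<phi>) c) \<in> ed G" if "(a, c) \<in> ed S" for a c
    using that edge assms(1,3) by (auto simp: bigraph_def emb_def)
  ultimately show ?thesis by (simp add: emb_def)
qed

text \<open>Neighbourhoods are preserved by an embedding between dv-regular graphs:
  the image of the dv neighbours of v are dv neighbours of psi v, hence all of them.\<close>
lemma emb_neighbours:
  assumes "tanner dv S" "tanner dv G" "emb \<psi> S G" "v \<in> vn S"
  shows "{d. (\<psi> v, d) \<in> ed G} = \<psi> ` {c. (v, c) \<in> ed S}"
proof (rule sym, rule card_subset_eq)
  have "{d. (\<psi> v, d) \<in> ed G} \<subseteq> cn G" "finite (cn G)"
    using assms(2) by (auto simp: tanner_def bigraph_def)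
  then show "finite {d. (\<psi> v, d) \<in> ed G}" by (rule finite_subset)
  show "\<psi> ` {c. (v, c) \<in> ed S} \<subseteq> {d. (\<psi> v, d) \<in> ed G}"
    using assms(3) by (auto simp: emb_def)
  have "{c. (v, c) \<in> ed S} \<subseteq> cn S" using assms(1) by (auto simp: tanner_def bigraph_def)
  moreover have "inj_on \<psi> (cn S)" using assms(3) by (simp add: emb_def)
  ultimately have "card (\<psi> ` {c. (v, c) \<in> ed S}) = card {c. (v, c) \<in> ed S}"
    by (meson card_image inj_on_subset)
  also have "\<dots> = dv" using assms(1,4) by (simp add: tanner_def)
  also have "\<dots> = card {d. (\<psi> v, d) \<in> ed G}"
  proof -
    have "\<psi> v \<in> vn G" using assms(3,4) by (auto simp: emb_def)
    then show ?thesis using assms(2) by (simp add: tanner_def)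
  qed
  finally show "card (\<psi> ` {c. (v, c) \<in> ed S}) = card {d. (\<psi> v, d) \<in> ed G}" .
qed

lemma emb_iso_induced:
  assumes tS: "tanner dv S" and tG: "tanner dv G" and e: "emb \<psi> S G"
    and no_isolated: "\<And>c. c \<in> cn S \<Longrightarrow> \<exists>v. (v, c) \<in> ed S"
  shows "iso \<psi> S (induced G (\<psi> ` vn S))"
  unfolding iso_def
proof (intro conjI ballI)
  let ?H = "induced G (\<psi> ` vn S)"
  have edS: "ed S \<subseteq> vn S \<times> cn S" using tS by (simp add: tanner_def bigraph_def)
  have inj_c: "inj_on \<psi> (cn S)" and edge: "\<And>a c. (a, c) \<in> ed S \<Longrightarrow> (\<psi> a, \<psi> c) \<in> ed G"
    using e by (auto simp: emb_def)
  note nbr = emb_neighbours[OF tS tG e]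
  show "bij_betw \<psi> (vn S) (vn ?H)" using e by (simp add: induced_def bij_betw_def emb_def)
  have "\<psi> ` cn S = cn ?H"
  proof
    show "\<psi> ` cn S \<subseteq> cn ?H"
      using no_isolated edS edge e by (fastforce simp: induced_def emb_def)
    show "cn ?H \<subseteq> \<psi> ` cn S"
    proof
      fix d assume "d \<in> cn ?H"
      then obtain v where v: "v \<in> vn S" "(\<psi> v, d) \<in> ed G" by (auto simp: induced_def)
      then have "d \<in> \<psi> ` {c. (v, c) \<in> ed S}" using nbr by blast
      then show "d \<in> \<psi> ` cn S" using edS by auto
    qed
  qed
  then show "bij_betw \<psi> (cn S) (cn ?H)" using inj_c by (simp add: bij_betw_def)
  fix v c assume v: "v \<in> vn S" and c: "c \<in> cn S"
  show "(v, c) \<in> ed S \<longleftrightarrow> (\<psi> v, \<psi> c) \<in> ed ?H"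
  proof
    assume "(v, c) \<in> ed S"
    then show "(\<psi> v, \<psi> c) \<in> ed ?H" using edge v by (auto simp: induced_def)
  next
    assume "(\<psi> v, \<psi> c) \<in> ed ?H"
    then obtain c' where c': "(v, c') \<in> ed S" "\<psi> c = \<psi> c'"
      using nbr[OF v] by (auto simp: induced_def)
    then have "c = c'" using inj_c c edS by (auto dest: inj_onD)
    then show "(v, c) \<in> ed S" using c' by simp
  qed
qed

section \<open>Deleting check nodes without neighbours\<close>

text \<open>Removing check nodes that carry no edge changes neither syndromes nor the
  counts chi, hence not the decoder's run.\<close>
lemma tstate_drop_checks:
  assumes "vn G' = vn G" "ed G' = ed G" "cn G' \<subseteq> cn G" "ed G \<subseteq> vn G \<times> cn G'"
  shows "tstate F G Ve l = tstate F G' Ve l"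
proof -
  have synd_eq: "synd G = synd G'" using assms(1,2) by (simp add: synd_def fun_eq_iff)
  have "{c \<in> cn G. (v, c) \<in> ed G \<and> P c} = {c \<in> cn G'. (v, c) \<in> ed G' \<and> P c}" for v P
    using assms by blast
  then have chi_eq: "chi G = chi G'" by (simp add: chi_def fun_eq_iff)
  show ?thesis by (induction l) (simp_all add: synd_eq chi_eq Let_def)
qed

text \<open>A deleted check node has zero syndrome, so convergence is unchanged too.\<close>
lemma converges_drop_checks:
  assumes "vn G' = vn G" "ed G' = ed G" "cn G' \<subseteq> cn G" "ed G \<subseteq> vn G \<times> cn G'"
  shows "converges F G Ve = converges F G' Ve"
proof -
  have synd_eq: "synd G = synd G'" using assms(1,2) by (simp add: synd_def fun_eq_iff)
  have no_synd: "\<not> synd G w c" if "c \<notin> cn G'" for w c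
  proof -
    have none: "{v \<in> vn G. (v, c) \<in> ed G \<and> vbit (w v)} = {}" using assms(4) that by blast
    show ?thesis unfolding synd_def none by simp
  qed
  have "zero_synd F G Ve l = zero_synd F G' Ve l" for l
    using assms(3) no_synd unfolding zero_synd_def tstate_drop_checks[OF assms] synd_eq
    by blast
  then show ?thesis by (simp add: converges_def)
qed

section \<open>Minimal failing embedded graphs\<close>

definition failing_emb ::
    "nat \<Rightarrow> tbf \<Rightarrow> 'v tgraph \<Rightarrow> 'v set \<Rightarrow> 'v tgraph \<Rightarrow> 'v tgraph \<Rightarrow> ('v \<Rightarrow> 'v) \<Rightarrow> bool" where
  "failing_emb dv F G Ve S J \<psi> \<longleftrightarrow> tanner dv S \<and> subgraph J S \<and>
     isomorphic J (induced G Ve) \<and> fails_on F S J \<and> emb \<psi> S G \<and> \<psi> ` vn J = Ve"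

lemma failing_emb_self:
  assumes "tanner dv G" "Ve \<subseteq> vn G" "\<not> converges F G Ve"
  shows "failing_emb dv F G Ve G (induced G Ve) id"
proof -
  have "bigraph G" using assms(1) by (simp add: tanner_def)
  then have "bigraph (induced G Ve)"
    using assms(2) by (auto simp: bigraph_def induced_def intro: finite_subset)
  moreover have "iso id (induced G Ve) (induced G Ve)" by (simp add: iso_def)
  ultimately show ?thesis using assms
    by (auto simp: failing_emb_def subgraph_def induced_def isomorphic_def fails_on_def emb_def)
qed

lemma minimal_failing_emb:
  assumes "failing_emb dv F G Ve S0 J0 \<psi>0"
  obtains S J \<psi> where "failing_emb dv F G Ve S J \<psi>"
    and "\<And>S' J' \<psi>'. failing_emb dv F G Ve S' J' \<psi>' \<Longrightarrow> gsize S \<le> gsize S'"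
proof -
  obtain x where "failing_emb dv F G Ve (fst x) (fst (snd x)) (snd (snd x))"
      and "\<forall>y. failing_emb dv F G Ve (fst y) (fst (snd y)) (snd (snd y))
               \<longrightarrow> gsize (fst x) \<le> gsize (fst y)"
    using ex_has_least_nat[of "\<lambda>x. failing_emb dv F G Ve (fst x) (fst (snd x)) (snd (snd x))"
        "(S0, J0, \<psi>0)" "\<lambda>x. gsize (fst x)"] assms by auto
  then show ?thesis by (metis fst_conv snd_conv that)
qed

text \<open>In a minimal failing triple every check node of S has a neighbour: otherwise
  deleting it gives a smaller failing triple.\<close>
lemma minimal_failing_emb_no_isolated:
  assumes fe: "failing_emb dv F G Ve S J \<psi>"
    and min: "\<And>S' J' \<psi>'. failing_emb dv F G Ve S' J' \<psi>' \<Longrightarrow> gsize S \<le> gsize S'"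
    and c: "c \<in> cn S"
  shows "\<exists>v. (v, c) \<in> ed S"
proof (rule ccontr)
  assume isolated: "\<not> (\<exists>v. (v, c) \<in> ed S)"
  have tS: "tanner dv S" and sJ: "subgraph J S" and fJ: "fails_on F S J"
    using fe by (auto simp: failing_emb_def)
  have bS: "bigraph S" using tS by (simp add: tanner_def)
  define S' where "S' = S\<lparr>cn := cn S - {c}\<rparr>"
  have S': "vn S' = vn S" "ed S' = ed S" "cn S' = cn S - {c}" by (simp_all add: S'_def)
  have edS: "ed S \<subseteq> vn S \<times> cn S'" using bS isolated S' by (auto simp: bigraph_def)
  have bS': "bigraph S'" using bS edS S' by (auto simp: bigraph_def)
  have sub: "subgraph S' S" using bS' S' by (auto simp: subgraph_def)
  have "c \<notin> cn J"
  proof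
    assume cJ: "c \<in> cn J"
    obtain \<phi> where \<phi>: "iso \<phi> J (induced G Ve)"
      using fe by (auto simp: failing_emb_def isomorphic_def)
    obtain v where "(v, c) \<in> ed J" using iso_induced_check_has_neighbour[OF \<phi> cJ] by blast
    then show False using sJ isolated by (auto simp: subgraph_def)
  qed
  then have "subgraph J S'" using sJ S' by (auto simp: subgraph_def)
  moreover have "tanner dv S'" using bS' tS S' by (simp add: tanner_def)
  moreover have "fails_on F S' J"
    using fJ converges_drop_checks[of S' S] S' edS by (simp add: fails_on_def)
  moreover have "emb \<psi> S' G" using fe sub by (auto simp: failing_emb_def intro: emb_subgraph)
  ultimately have "failing_emb dv F G Ve S' J \<psi>" using fe by (simp add: failing_emb_def)
  then have "gsize S \<le> gsize S'" by (rule min)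
  moreover have "gsize S' < gsize S"
    using gsize_proper_subgraph[OF sub bS] S' c by auto
  ultimately show False by simp
qed

text \<open>A minimal failing S is a trapping set: a failing graph S2 isomorphic to a proper
  subgraph U of S (with V(J2) sent into V(J)) would, via psi, give a smaller failing
  triple; its corrupt set is all of Ve by counting.\<close>
lemma minimal_failing_emb_in_Er:
  fixes S J :: "'v tgraph"
  assumes fe: "failing_emb dv F G Ve S J \<psi>" and fin: "finite Ve"
    and min: "\<And>S' J' \<psi>'. failing_emb dv F G Ve S' J' \<psi>' \<Longrightarrow> gsize S \<le> gsize S'"
  shows "in_Er dv F (induced G Ve) S"
proof -
  have tS: "tanner dv S" and eS: "emb \<psi> S G" and VJ: "\<psi> ` vn J = Ve"
    using fe by (auto simp: failing_emb_def)
  have bS: "bigraph S" using tS by (simp add: tanner_def)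
  have no_smaller: False
    if tS2: "tanner dv S2" and sJ2: "subgraph J2 S2" and iJ2: "isomorphic J2 (induced G Ve)"
      and fJ2: "fails_on F S2 J2" and sU: "subgraph U S" and US: "U \<noteq> S"
      and iso: "iso \<phi> S2 U" and into: "\<phi> ` vn J2 \<subseteq> vn J"
    for S2 J2 U :: "'v tgraph" and \<phi> :: "'v \<Rightarrow> 'v"
  proof -
    have bS2: "bigraph S2" using tS2 by (simp add: tanner_def)
    have bU: "bigraph U" using sU by (simp add: subgraph_def)
    have e2: "emb (\<psi> \<circ> \<phi>) S2 G" by (rule emb_comp_iso[OF emb_subgraph[OF eS sU] iso bS2])
    have "(\<psi> \<circ> \<phi>) ` vn J2 = Ve"
    proof (rule card_subset_eq[OF fin])
      show "(\<psi> \<circ> \<phi>) ` vn J2 \<subseteq> Ve" using into VJ by (auto simp: image_comp[symmetric])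
      have "inj_on (\<psi> \<circ> \<phi>) (vn J2)"
        using e2 sJ2 by (auto simp: emb_def subgraph_def intro: inj_on_subset)
      then have "card ((\<psi> \<circ> \<phi>) ` vn J2) = card (vn J2)" by (rule card_image)
      also have "\<dots> = card Ve" using iJ2 iso_induced_card by (auto simp: isomorphic_def)
      finally show "card ((\<psi> \<circ> \<phi>) ` vn J2) = card Ve" .
    qed
    then have "failing_emb dv F G Ve S2 J2 (\<psi> \<circ> \<phi>)"
      using tS2 sJ2 iJ2 fJ2 e2 by (simp add: failing_emb_def)
    then have "gsize S \<le> gsize S2" by (rule min)
    moreover have "gsize S2 = gsize U" by (rule gsize_iso[OF bS2 bU iso])
    moreover have "gsize U < gsize S" by (rule gsize_proper_subgraph[OF sU bS US])
    ultimately show False by simp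
  qed
  show ?thesis
    using fe no_smaller unfolding in_Er_def failing_emb_def by blast
qed

theorem proposition2:
  fixes dv :: nat and F :: tbf and G :: "'v tgraph" and Ve :: "'v set"
  assumes "is_TBF dv F"
    and "tanner dv G"
    and "Ve \<subseteq> vn G"
    and "\<not> (\<exists>Vs (S :: 'v tgraph). Ve \<subseteq> Vs \<and> Vs \<subseteq> vn G \<and>
              in_Er dv F (induced G Ve) S \<and> isomorphic (induced G Vs) S)"
  shows "converges F G Ve"
proof (rule ccontr)
  assume "\<not> converges F G Ve"
  then obtain S J \<psi> where fe: "failing_emb dv F G Ve S J \<psi>"
    and min: "\<And>S' J' \<psi>'. failing_emb dv F G Ve S' J' \<psi>' \<Longrightarrow> gsize S \<le> gsize S'"
    using minimal_failing_emb failing_emb_self[OF assms(2,3)] by metis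
  have bG: "bigraph G" using assms(2) by (simp add: tanner_def)
  have "finite Ve" using bG assms(3) by (auto simp: bigraph_def intro: finite_subset)
  then have trapping: "in_Er dv F (induced G Ve) S"
    using minimal_failing_emb_in_Er fe min by blast
  have tS: "tanner dv S" and eS: "emb \<psi> S G" using fe by (simp_all add: failing_emb_def)
  have no_isolated: "\<exists>v. (v, c) \<in> ed S" if "c \<in> cn S" for c
    using fe min that by (rule minimal_failing_emb_no_isolated)
  have "iso \<psi> S (induced G (\<psi> ` vn S))" by (rule emb_iso_induced[OF tS assms(2) eS no_isolated])
  moreover have image: "\<psi> ` vn S \<subseteq> vn G" using eS by (simp add: emb_def)
  then have "vn (induced G (\<psi> ` vn S)) \<inter> cn (induced G (\<psi> ` vn S)) = {}"
    using bG by (auto simp: induced_def bigraph_def)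
  ultimately have "isomorphic (induced G (\<psi> ` vn S)) S"
    unfolding isomorphic_def by (blast intro: iso_inv)
  moreover have "Ve \<subseteq> \<psi> ` vn S" using fe by (auto simp: failing_emb_def subgraph_def)
  ultimately show False using assms(4) trapping image by blast
qed

end
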